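(* Let $a<b$ and let $X(t),Y(t)$, $t\in[a,b]$, be stochastic processes (on a common probability space) with continuous sample paths, and assume that $Y$ has $C^1[a,b]$ sample paths. For $n\ge1$ and $p\ge1$ put $\mathsf{V}^p_n(Z;[a,b])=\sum_{j=1}^n|Z(t_j)-Z(t_{j-1})|^p$, where $t_j=a+(b-a)j/n$, $j=0,\dots,n$. \begin{enumerate} \item If there exists $p>1$ such that the almost sure limit $\mathsf{V}^p(X;[a,b]):=\lim_{n\to\infty}\mathsf{V}^p_n(X;[a,b])$ exists and satisfies $0<\mathsf{V}^p(X;[a,b])<\infty$, then $\lim_{n\to\infty}\mathsf{V}^p_n(X+Y;[a,b])$ exists almost surely and $\mathsf{V}^p(X+Y;[a,b])=\mathsf{V}^p(X;[a,b])$. \item Similarly, if for some $p>1$ the limit in probability $\mathsf{V}^p_{\mathbb{P}}(X;[a,b]):=\mathbb{P}\text{-}\lim_{n\to\infty}\mathsf{V}^p_n(X;[a,b])$ exists and satisfies $0<\mathsf{V}^p_{\mathbb{P}}(X;[a,b])<\infty$, then $\mathsf{V}^p_{\mathbb{P}}(X+Y;[a,b])=\mathsf{V}^p_{\mathbb{P}}(X;[a,b])$ (in particular the limit in probability for $X+Y$ exists). \item If in addition to the hypothesis of item 1 there exist $\alpha,\sigma_0>0$ with $\alpha+1/p<1$ such that $n^\alpha\big(\mathsf{V}^p_n(X;[a,b])-\mathsf{V}^p(X;[a,b])\big)\to\mathcal{N}(0,\sigma_0^2)$ in distribution as $n\to\infty$, then also $n^\alpha\big(\mathsf{V}^p_n(X+Y;[a,b])-\mathsf{V}^p(X;[a,b])\big)\to\mathcal{N}(0,\sigma_0^2)$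 in distribution. \item Moreover, if $Y$ has $C^2[a,b]$ sample paths and the convergence in distribution of item 3 holds with $p=2$ and $\alpha=1/2$ (with $0<\mathsf{V}^2(X;[a,b])<\infty$), then the conclusion of item 3 holds as well with $p=2$, $\alpha=1/2$. \end{enumerate}
   Context: $\mathcal{N}(0,\sigma_0^2)$ denotes the centered normal law with variance $\sigma_0^2$. *)

theory Defs
  imports "HOL-Probability.Probability"
begin

definition pvar_n :: "real \<Rightarrow> (real \<Rightarrow> real) \<Rightarrow> real \<Rightarrow> real \<Rightarrow> nat \<Rightarrow> real" where
  "pvar_n p Z a b n =
     (\<Sum>j\<in>{1..n}. \<bar>Z (a + (b - a) * real j / real n) - Z (a + (b - a) * real (j - 1) / real n)\<bar> powr p)"

definition C1_on :: "real \<Rightarrow> real \<Rightarrow> (real \<Rightarrow> real) \<Rightarrow> bool" where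
  "C1_on a b f \<longleftrightarrow> (\<exists>f'. continuous_on {a..b} f' \<and>
      (\<forall>t\<in>{a..b}. (f has_real_derivative f' t) (at t within {a..b})))"

definition C2_on :: "real \<Rightarrow> real \<Rightarrow> (real \<Rightarrow> real) \<Rightarrow> bool" where
  "C2_on a b f \<longleftrightarrow> (\<exists>f' f''. continuous_on {a..b} f'' \<and>
      (\<forall>t\<in>{a..b}. (f has_real_derivative f' t) (at t within {a..b})) \<and>
      (\<forall>t\<in>{a..b}. (f' has_real_derivative f'' t) (at t within {a..b})))"

definition conv_in_prob :: "'a measure \<Rightarrow> (nat \<Rightarrow> 'a \<Rightarrow> real) \<Rightarrow> ('a \<Rightarrow> real) \<Rightarrow> bool" where
  "conv_in_prob M Z L \<longleftrightarrow>
     (\<forall>e>0. (\<lambda>n. measure M {\<omega>\<in>space M. e < \<bar>Z n \<omega> - L \<omega>\<bar>}) \<longlonglongrightarrow> 0)"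

end

theory Submission
  imports Defs
begin

text \<open>Along the uniform partition of mesh h = (b - a)/n a C^1 path Y has increments O(h).
For p > 1 the elementary estimate ||u + v|^p - |u|^p| <= p |v| (|u| + |v|)^(p-1), together with
y^(p-1) <= l^(p-1) + y^p / l at the scale l = n^(-1/p), shows that the p-variation sums of X + Y and
of X differ by O(n^(1/p - 1) (1 + V_n^p(X))). Hence the two sums have the same limit, almost surely
or in probability, and their difference is negligible after multiplication by n^alpha whenever
alpha + 1/p < 1; a Slutsky argument then transfers the Gaussian limit. For p = 2 and C^2 paths,
summation by parts against the second differences of Y, which are O(h^2), improves the error to
O(1/n), which is negligible at the scale n^(1/2).\<close>

lemma powr_diff_le_mean_value:
  fixes x y p :: real
  assumes x: "0 \<le> x" and xy: "x \<le> y" and p: "p \<ge> 1"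
  shows "y powr p - x powr p \<le> p * (y - x) * y powr (p - 1)"
proof (cases "x = y")
  case False
  then have lt: "x < y" using xy by simp
  have "continuous_on {x..y} (\<lambda>t. t powr p)"
    using x p by (intro continuous_on_powr') (auto intro: continuous_intros)
  moreover have "(\<lambda>t. t powr p) differentiable (at t)" if "x < t" for t
    using has_real_derivative_powr[of t p] that x real_differentiable_def by force
  ultimately obtain l z where z: "x < z" "z < y" and dz: "DERIV (\<lambda>t. t powr p) z :> l"
    and eq: "y powr p - x powr p = (y - x) * l"
    using MVT[OF lt] by blast
  have "l = p * z powr (p - 1)"
    using DERIV_unique[OF dz has_real_derivative_powr[of z p]] z x by simp
  moreover have "z powr (p - 1) \<le> y powr (p - 1)"
    using z x p by (intro powr_mono2) auto
  ultimately show ?thesis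
    using eq lt p by (simp add: mult_left_mono mult.assoc)
qed simp

lemma abs_powr_diff_le:
  fixes x y p :: real
  assumes "0 \<le> x" "0 \<le> y" "p \<ge> 1" "max x y \<le> c"
  shows "\<bar>y powr p - x powr p\<bar> \<le> p * \<bar>y - x\<bar> * c powr (p - 1)"
proof -
  have "\<bar>y powr p - x powr p\<bar> \<le> p * \<bar>y - x\<bar> * max x y powr (p - 1)"
  proof (cases "x \<le> y")
    case True
    then show ?thesis
      using powr_diff_le_mean_value[of x y p] assms powr_mono2[of p x y] by (simp add: max_def)
  next
    case False
    then show ?thesis
      using powr_diff_le_mean_value[of y x p] assms powr_mono2[of p y x] by (simp add: max_def)
  qed
  also have "\<dots> \<le> p * \<bar>y - x\<bar> * c powr (p - 1)"
    using assms by (intro mult_left_mono powr_mono2) auto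
  finally show ?thesis .
qed

lemma powr_minus_one_le:
  fixes c p l :: real
  assumes "0 \<le> c" "p \<ge> 1" "l > 0"
  shows "c powr (p - 1) \<le> l powr (p - 1) + c powr p / l"
proof (cases "c \<le> l")
  case True
  then show ?thesis
    using assms powr_mono2[of "p - 1" c l] by (simp add: add_increasing2)
next
  case False
  then have "c powr (p - 1) * l \<le> c powr (p - 1) * c"
    using assms by (intro mult_left_mono) auto
  also have "\<dots> = c powr p"
    using False assms powr_add[of c "p - 1" 1] by simp
  finally show ?thesis
    using assms by (simp add: le_divide_eq add_increasing)
qed

lemma powr_add_le:
  fixes x y p :: real
  assumes "0 \<le> x" "0 \<le> y" "p \<ge> 0"
  shows "(x + y) powr p \<le> 2 powr p * (x powr p + y powr p)"
proof -
  have "(x + y) powr p \<le> (2 * max x y) powr p"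
    using assms by (intro powr_mono2) auto
  also have "\<dots> = 2 powr p * max x y powr p"
    using assms by (simp add: powr_mult)
  also have "\<dots> \<le> 2 powr p * (x powr p + y powr p)"
    by (intro mult_left_mono) (auto simp: max_def)
  finally show ?thesis .
qed

lemma abs_powr_perturb_le:
  fixes u v d p l :: real
  assumes p: "p > 1" and v: "\<bar>v\<bar> \<le> d" and l: "l > 0"
  shows "\<bar>\<bar>u + v\<bar> powr p - \<bar>u\<bar> powr p\<bar>
    \<le> p * d * (l powr (p - 1) + 2 powr p * (\<bar>u\<bar> powr p + d powr p) / l)"
proof -
  have d: "0 \<le> d" using v by simp
  have "\<bar>\<bar>u + v\<bar> powr p - \<bar>u\<bar> powr p\<bar> \<le> p * \<bar>\<bar>u + v\<bar> - \<bar>u\<bar>\<bar> * (\<bar>u\<bar> + d) powr (p - 1)"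
    using p v by (intro abs_powr_diff_le) auto
  also have "\<dots> \<le> p * d * (\<bar>u\<bar> + d) powr (p - 1)"
    using p v by (intro mult_right_mono mult_left_mono) auto
  also have "\<dots> \<le> p * d * (l powr (p - 1) + (\<bar>u\<bar> + d) powr p / l)"
    using p d l by (intro mult_left_mono powr_minus_one_le) auto
  also have "\<dots> \<le> p * d * (l powr (p - 1) + 2 powr p * (\<bar>u\<bar> powr p + d powr p) / l)"
    using p d l by (intro mult_left_mono add_left_mono divide_right_mono powr_add_le) auto
  finally show ?thesis .
qed

lemma sum_abs_powr_perturb_le:
  fixes u v :: "'i \<Rightarrow> real"
  assumes p: "p > 1" and v: "\<And>j. j \<in> A \<Longrightarrow> \<bar>v j\<bar> \<le> d" and l: "l > 0"
  shows "\<bar>(\<Sum>j\<in>A. \<bar>u j + v j\<bar> powr p) - (\<Sum>j\<in>A. \<bar>u j\<bar> powr p)\<bar>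
    \<le> p * d * (card A * l powr (p - 1) + 2 powr p * ((\<Sum>j\<in>A. \<bar>u j\<bar> powr p) + card A * d powr p) / l)"
proof -
  have "\<bar>(\<Sum>j\<in>A. \<bar>u j + v j\<bar> powr p) - (\<Sum>j\<in>A. \<bar>u j\<bar> powr p)\<bar>
      \<le> (\<Sum>j\<in>A. \<bar>\<bar>u j + v j\<bar> powr p - \<bar>u j\<bar> powr p\<bar>)"
    by (simp only: sum_subtractf[symmetric] sum_abs)
  also have "\<dots> \<le> (\<Sum>j\<in>A. p * d * (l powr (p - 1) + 2 powr p * (\<bar>u j\<bar> powr p + d powr p) / l))"
    using p v l by (intro sum_mono abs_powr_perturb_le) auto
  also have "\<dots> = p * d * (card A * l powr (p - 1) + 2 powr p * ((\<Sum>j\<in>A. \<bar>u j\<bar> powr p) + card A * d powr p) / l)"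
    by (simp add: sum.distrib sum_distrib_left ring_distribs add_divide_distrib flip: sum_divide_distrib)
  finally show ?thesis .
qed

lemma pvar_n_nonneg: "0 \<le> pvar_n p Z a b n"
  unfolding pvar_n_def by (intro sum_nonneg) simp

lemma uniform_partition_point_mem:
  assumes "a \<le> b" and "j \<le> n"
  shows "a + (b - a) * real j / real n \<in> {a..b}"
proof -
  have "0 \<le> real j / real n" "real j / real n \<le> 1"
    using assms by (auto simp: divide_le_eq_1)
  then have "0 \<le> (b - a) * (real j / real n)" "(b - a) * (real j / real n) \<le> b - a"
    using assms mult_left_le[of "real j / real n" "b - a"] by simp_all
  then show ?thesis by auto
qed

lemma uniform_partition_step:
  assumes "j \<ge> 1"
  shows "a + (b - a) * real j / real n - (a + (b - a) * real (j - 1) / real n) = (b - a) / real n"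
  using assms by (simp add: of_nat_diff diff_divide_distrib[symmetric] algebra_simps)

lemma perturb_bound_uniform_mesh_le:
  fixes N p L V :: real
  assumes N: "N \<ge> 1" and p: "p > 1" and L: "L \<ge> 0" and V: "V \<ge> 0"
  shows "p * (L / N) * (N * (N powr (-1/p)) powr (p - 1)
      + 2 powr p * (V + N * (L / N) powr p) / N powr (-1/p))
    \<le> p * L * (1 + 2 powr p + 2 powr p * L powr p) * N powr (1/p - 1) * (1 + V)"
proof -
  define E where "E = N powr (1/p - 1)"
  define d where "d = L / N"
  define l where "l = N powr (-1/p)"
  have "d * N * l powr (p - 1) = L * E"
  proof -
    have "-1/p * (p - 1) = 1/p - 1" using p by (simp add: field_simps)
    then show ?thesis using N by (simp add: d_def l_def E_def powr_powr)
  qed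
  moreover have "d / l = L * E"
    using N by (simp add: d_def l_def E_def powr_diff powr_minus divide_inverse)
  moreover have "p * d * (N * l powr (p - 1) + 2 powr p * (V + N * d powr p) / l)
      = p * (d * N * l powr (p - 1)) + p * 2 powr p * (d / l) * (V + N * d powr p)"
    by (simp add: algebra_simps add_divide_distrib)
  ultimately have "p * d * (N * l powr (p - 1) + 2 powr p * (V + N * d powr p) / l)
      = p * L * E + p * 2 powr p * L * E * (V + N * d powr p)"
    by (simp add: algebra_simps)
  also have "\<dots> \<le> p * L * E + p * 2 powr p * L * E * (V + L powr p)"
  proof -
    have "N * d powr p = L powr p * (N / N powr p)"
      using N L by (simp add: d_def powr_divide)
    also have "\<dots> \<le> L powr p"
      using N p powr_mono[of 1 p N] by (intro mult_left_le) auto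
    finally show ?thesis
      using p L by (intro add_left_mono mult_left_mono) (auto simp: E_def)
  qed
  also have "\<dots> \<le> p * L * (1 + 2 powr p + 2 powr p * L powr p) * E * (1 + V)"
  proof -
    have "1 + 2 powr p * (V + L powr p) \<le> (1 + 2 powr p + 2 powr p * L powr p) * (1 + V)"
      using V by (simp add: algebra_simps)
    then have "p * L * E * (1 + 2 powr p * (V + L powr p))
        \<le> p * L * E * ((1 + 2 powr p + 2 powr p * L powr p) * (1 + V))"
      using p L by (intro mult_left_mono) (auto simp: E_def)
    then show ?thesis by (simp add: algebra_simps)
  qed
  finally show ?thesis by (simp add: d_def l_def E_def)
qed

lemma pvar_n_add_lipschitz_bound:
  fixes f g :: "real \<Rightarrow> real"
  assumes p: "p > 1" and ab: "a \<le> b" and K: "K \<ge> 0"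
    and lip: "\<And>s t. s \<in> {a..b} \<Longrightarrow> t \<in> {a..b} \<Longrightarrow> \<bar>g s - g t\<bar> \<le> K * \<bar>s - t\<bar>"
  obtains C where "\<And>n. \<bar>pvar_n p (\<lambda>t. f t + g t) a b n - pvar_n p f a b n\<bar>
    \<le> C * real n powr (1/p - 1) * (1 + pvar_n p f a b n)"
proof (rule that)
  define L where "L = K * (b - a)"
  have L: "L \<ge> 0" using K ab by (simp add: L_def)
  fix n :: nat
  show "\<bar>pvar_n p (\<lambda>t. f t + g t) a b n - pvar_n p f a b n\<bar>
    \<le> p * L * (1 + 2 powr p + 2 powr p * L powr p) * real n powr (1/p - 1) * (1 + pvar_n p f a b n)"
  proof (cases "n = 0")
    case False
    define T where "T j = a + (b - a) * real j / real n" for j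
    define u where "u j = f (T j) - f (T (j - 1))" for j
    define v where "v j = g (T j) - g (T (j - 1))" for j
    have n: "real n \<ge> 1" using False by simp
    have incr: "\<bar>v j\<bar> \<le> L / real n" if "j \<in> {1..n}" for j
    proof -
      have "T j \<in> {a..b}" "T (j - 1) \<in> {a..b}"
        unfolding T_def using that ab by (intro uniform_partition_point_mem; auto)+
      then have "\<bar>v j\<bar> \<le> K * \<bar>T j - T (j - 1)\<bar>"
        unfolding v_def by (rule lip)
      also have "\<dots> = L / real n"
        using uniform_partition_step[of j a b n] that ab n by (simp add: T_def L_def)
      finally show ?thesis .
    qed
    have fg: "pvar_n p (\<lambda>t. f t + g t) a b n = (\<Sum>j\<in>{1..n}. \<bar>u j + v j\<bar> powr p)"
      by (simp add: pvar_n_def u_def v_def T_def algebra_simps)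
    have f: "pvar_n p f a b n = (\<Sum>j\<in>{1..n}. \<bar>u j\<bar> powr p)"
      by (simp add: pvar_n_def u_def T_def)
    have l: "real n powr (-1/p) > 0" using n by simp
    have "\<bar>pvar_n p (\<lambda>t. f t + g t) a b n - pvar_n p f a b n\<bar>
        \<le> p * (L / real n) * (real n * (real n powr (-1/p)) powr (p - 1)
          + 2 powr p * (pvar_n p f a b n + real n * (L / real n) powr p) / real n powr (-1/p))"
      using sum_abs_powr_perturb_le[where A = "{1..n}" and u = u and v = v, OF p incr l]
      unfolding fg f by simp
    also have "\<dots> \<le> p * L * (1 + 2 powr p + 2 powr p * L powr p) * real n powr (1/p - 1)
        * (1 + pvar_n p f a b n)"
      by (rule perturb_bound_uniform_mesh_le[OF n p L pvar_n_nonneg])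
    finally show ?thesis .
  qed (simp add: pvar_n_def)
qed

lemma continuous_on_interval_abs_bound:
  fixes h :: "real \<Rightarrow> real"
  assumes "continuous_on {a..b} h"
  obtains B where "B \<ge> 0" and "\<And>x. x \<in> {a..b} \<Longrightarrow> \<bar>h x\<bar> \<le> B"
proof -
  have "bounded (h ` {a..b})"
    by (intro compact_imp_bounded compact_continuous_image assms) auto
  then obtain B where "B > 0" and "\<And>x. x \<in> {a..b} \<Longrightarrow> \<bar>h x\<bar> \<le> B"
    unfolding bounded_pos by auto
  then show ?thesis
    using that less_imp_le by blast
qed

lemma derivative_bound_lipschitz:
  fixes g g' :: "real \<Rightarrow> real"
  assumes "\<And>t. t \<in> {a..b} \<Longrightarrow> (g has_real_derivative g' t) (at t within {a..b})"
    and "\<And>t. t \<in> {a..b} \<Longrightarrow> \<bar>g' t\<bar> \<le> B"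
    and "s \<in> {a..b}" and "t \<in> {a..b}"
  shows "\<bar>g s - g t\<bar> \<le> B * \<bar>s - t\<bar>"
  using field_differentiable_bound[of "{a..b}" g g' B s t] assms by auto

lemma C1_on_lipschitz:
  assumes "C1_on a b g"
  obtains K where "K \<ge> 0"
    and "\<And>s t. s \<in> {a..b} \<Longrightarrow> t \<in> {a..b} \<Longrightarrow> \<bar>g s - g t\<bar> \<le> K * \<bar>s - t\<bar>"
proof -
  obtain g' where "continuous_on {a..b} g'"
    and "\<And>t. t \<in> {a..b} \<Longrightarrow> (g has_real_derivative g' t) (at t within {a..b})"
    using assms unfolding C1_on_def by blast
  then show ?thesis
    using that derivative_bound_lipschitz continuous_on_interval_abs_bound by metis
qed

lemma C2_on_imp_C1_on:
  assumes "C2_on a b g"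
  shows "C1_on a b g"
proof -
  obtain g' g'' where "\<forall>t\<in>{a..b}. (g has_real_derivative g' t) (at t within {a..b})"
    and "\<forall>t\<in>{a..b}. (g' has_real_derivative g'' t) (at t within {a..b})"
    using assms unfolding C2_on_def by blast
  then show ?thesis
    unfolding C1_on_def by (blast intro: DERIV_continuous_on)
qed

lemma C2_on_derivative_lipschitz:
  assumes "C2_on a b g"
  obtains g' K where "K \<ge> 0"
    and "\<And>t. t \<in> {a..b} \<Longrightarrow> (g has_real_derivative g' t) (at t within {a..b})"
    and "\<And>s t. s \<in> {a..b} \<Longrightarrow> t \<in> {a..b} \<Longrightarrow> \<bar>g' s - g' t\<bar> \<le> K * \<bar>s - t\<bar>"
proof -
  obtain g' g'' where "continuous_on {a..b} g''"
    and "\<And>t. t \<in> {a..b} \<Longrightarrow> (g has_real_derivative g' t) (at t within {a..b})"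
    and "\<And>t. t \<in> {a..b} \<Longrightarrow> (g' has_real_derivative g'' t) (at t within {a..b})"
    using assms unfolding C2_on_def by blast
  then show ?thesis
    using that derivative_bound_lipschitz continuous_on_interval_abs_bound by metis
qed

lemma linearization_error_le:
  fixes g g' :: "real \<Rightarrow> real"
  assumes deriv: "\<And>t. t \<in> {a..b} \<Longrightarrow> (g has_real_derivative g' t) (at t within {a..b})"
    and lip: "\<And>s t. s \<in> {a..b} \<Longrightarrow> t \<in> {a..b} \<Longrightarrow> \<bar>g' s - g' t\<bar> \<le> K * \<bar>s - t\<bar>"
    and st: "a \<le> s" "s \<le> t" "t \<le> b" and c: "c \<in> {s..t}" and K: "K \<ge> 0"
  shows "\<bar>g t - g s - g' c * (t - s)\<bar> \<le> K * (t - s) * (t - s)"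
proof -
  have "(g has_real_derivative g' x) (at x within {s..t})" if "x \<in> {s..t}" for x
    using deriv[of x] that st by (auto intro: has_field_derivative_subset)
  then have "((\<lambda>x. g x - g' c * x) has_real_derivative g' x - g' c) (at x within {s..t})"
    if "x \<in> {s..t}" for x
    using that by (auto intro!: derivative_eq_intros)
  moreover have "\<bar>g' x - g' c\<bar> \<le> K * (t - s)" if "x \<in> {s..t}" for x
  proof -
    have "\<bar>g' x - g' c\<bar> \<le> K * \<bar>x - c\<bar>"
      using that c st by (intro lip) auto
    also have "\<dots> \<le> K * (t - s)"
      using that c K by (intro mult_left_mono) auto
    finally show ?thesis .
  qed
  ultimately have "\<bar>(g t - g' c * t) - (g s - g' c * s)\<bar> \<le> K * (t - s) * \<bar>t - s\<bar>"
    using st by (intro derivative_bound_lipschitz[where a = s and b = t and g' = "\<lambda>x. g' x - g' c"]) auto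
  then show ?thesis
    using st by (simp add: algebra_simps)
qed

lemma second_difference_le:
  fixes g g' :: "real \<Rightarrow> real"
  assumes deriv: "\<And>t. t \<in> {a..b} \<Longrightarrow> (g has_real_derivative g' t) (at t within {a..b})"
    and lip: "\<And>s t. s \<in> {a..b} \<Longrightarrow> t \<in> {a..b} \<Longrightarrow> \<bar>g' s - g' t\<bar> \<le> K * \<bar>s - t\<bar>"
    and K: "K \<ge> 0" and h: "h \<ge> 0" and t: "a \<le> t - h" "t + h \<le> b"
  shows "\<bar>(g t - g (t - h)) - (g (t + h) - g t)\<bar> \<le> 2 * K * h\<^sup>2"
proof -
  have "\<bar>g t - g (t - h) - g' t * h\<bar> \<le> K * h * h"
    using linearization_error_le[OF deriv lip, of "t - h" t t] K h t by simp
  moreover have "\<bar>g (t + h) - g t - g' t * h\<bar> \<le> K * h * h"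
    using linearization_error_le[OF deriv lip, of t "t + h" t] K h t by simp
  ultimately show ?thesis
    by (simp add: power2_eq_square)
qed

lemma sum_diff_mult_by_parts:
  fixes F v :: "nat \<Rightarrow> 'a::comm_ring"
  shows "(\<Sum>j\<in>{1..Suc m}. (F j - F (j - 1)) * v j)
    = F (Suc m) * v (Suc m) - F 0 * v 1 + (\<Sum>j\<in>{1..m}. F j * (v j - v (Suc j)))"
  by (induction m) (simp_all add: algebra_simps)

lemma sum_square_increment_perturb_le:
  fixes F v :: "nat \<Rightarrow> real" and A B D :: real
  assumes F: "\<And>j. j \<le> Suc m \<Longrightarrow> \<bar>F j\<bar> \<le> A"
    and v: "\<And>j. j \<in> {1..Suc m} \<Longrightarrow> \<bar>v j\<bar> \<le> B"
    and dv: "\<And>j. j \<in> {1..m} \<Longrightarrow> \<bar>v j - v (Suc j)\<bar> \<le> D"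
  shows "\<bar>(\<Sum>j\<in>{1..Suc m}. (F j - F (j - 1) + v j)\<^sup>2) - (\<Sum>j\<in>{1..Suc m}. (F j - F (j - 1))\<^sup>2)\<bar>
    \<le> 4 * A * B + 2 * real m * A * D + real (Suc m) * B\<^sup>2"
proof -
  have A: "A \<ge> 0" using F[of 0] by simp
  have "\<bar>\<Sum>j\<in>{1..m}. F j * (v j - v (Suc j))\<bar> \<le> (\<Sum>j\<in>{1..m}. \<bar>F j * (v j - v (Suc j))\<bar>)"
    by (rule sum_abs)
  also have "\<dots> \<le> real (card {1..m}) * (A * D)"
  proof (rule sum_bounded_above)
    fix j assume "j \<in> {1..m}"
    then show "\<bar>F j * (v j - v (Suc j))\<bar> \<le> A * D"
      unfolding abs_mult using F[of j] dv A by (intro mult_mono) auto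
  qed
  finally have "\<bar>\<Sum>j\<in>{1..m}. F j * (v j - v (Suc j))\<bar> \<le> real m * (A * D)"
    by simp
  moreover have "\<bar>F (Suc m) * v (Suc m)\<bar> \<le> A * B" "\<bar>F 0 * v 1\<bar> \<le> A * B"
    unfolding abs_mult using F v A by (auto intro!: mult_mono)
  ultimately have cross: "\<bar>\<Sum>j\<in>{1..Suc m}. (F j - F (j - 1)) * v j\<bar> \<le> 2 * A * B + real m * A * D"
    unfolding sum_diff_mult_by_parts by linarith
  have "\<bar>\<Sum>j\<in>{1..Suc m}. (v j)\<^sup>2\<bar> \<le> real (Suc m) * B\<^sup>2"
  proof -
    have "(v j)\<^sup>2 \<le> B\<^sup>2" if "j \<in> {1..Suc m}" for j
      using power_mono[OF v[OF that] abs_ge_zero, of 2] by simp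
    then show ?thesis
      using sum_bounded_above[of "{1..Suc m}" "\<lambda>j. (v j)\<^sup>2"] by (simp add: sum_nonneg)
  qed
  moreover have "(\<Sum>j\<in>{1..Suc m}. (F j - F (j - 1) + v j)\<^sup>2) - (\<Sum>j\<in>{1..Suc m}. (F j - F (j - 1))\<^sup>2)
      = 2 * (\<Sum>j\<in>{1..Suc m}. (F j - F (j - 1)) * v j) + (\<Sum>j\<in>{1..Suc m}. (v j)\<^sup>2)"
    unfolding sum_subtractf[symmetric] sum_distrib_left sum.distrib[symmetric]
    by (rule sum.cong) (simp_all add: power2_eq_square algebra_simps)
  ultimately show ?thesis
    using cross by (simp add: abs_triangle_ineq order_trans[OF abs_triangle_ineq])
qed

lemma uniform_mesh_quadratic_le:
  fixes A K Kg D :: real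
  assumes A: "A \<ge> 0" and K: "K \<ge> 0" and n: "n = Suc m"
  shows "4 * A * (Kg * (D / n)) + 2 * m * A * (2 * K * (D / n)\<^sup>2) + n * (Kg * (D / n))\<^sup>2
    \<le> (4 * A * Kg * D + 4 * A * K * D\<^sup>2 + Kg\<^sup>2 * D\<^sup>2) / n"
proof -
  have "real m * (D / n)\<^sup>2 = real m / real n * (D\<^sup>2 / real n)"
    by (simp add: power2_eq_square)
  also have "\<dots> \<le> D\<^sup>2 / real n"
    using n by (intro mult_left_le_one_le) auto
  finally have "4 * A * K * (real m * (D / n)\<^sup>2) \<le> 4 * A * K * (D\<^sup>2 / real n)"
    using A K by (intro mult_left_mono) auto
  moreover have "real n * (Kg * (D / n))\<^sup>2 = Kg\<^sup>2 * D\<^sup>2 / real n"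
    using n by (simp add: power2_eq_square)
  ultimately show ?thesis
    by (simp add: add_divide_distrib algebra_simps)
qed

lemma pvar_n_2_add_C2_bound:
  fixes f g :: "real \<Rightarrow> real"
  assumes ab: "a \<le> b" and f: "continuous_on {a..b} f" and g: "C2_on a b g"
  obtains C where "\<And>n. \<bar>pvar_n 2 (\<lambda>t. f t + g t) a b n - pvar_n 2 f a b n\<bar> \<le> C / real n"
proof -
  obtain A where A: "A \<ge> 0" "\<And>t. t \<in> {a..b} \<Longrightarrow> \<bar>f t\<bar> \<le> A"
    by (rule continuous_on_interval_abs_bound[OF f]) blast
  obtain Kg where Kg: "Kg \<ge> 0" "\<And>s t. s \<in> {a..b} \<Longrightarrow> t \<in> {a..b} \<Longrightarrow> \<bar>g s - g t\<bar> \<le> Kg * \<bar>s - t\<bar>"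
    by (rule C1_on_lipschitz[OF C2_on_imp_C1_on[OF g]]) blast
  obtain g' K where K: "K \<ge> 0"
    and g': "\<And>t. t \<in> {a..b} \<Longrightarrow> (g has_real_derivative g' t) (at t within {a..b})"
    and lip: "\<And>s t. s \<in> {a..b} \<Longrightarrow> t \<in> {a..b} \<Longrightarrow> \<bar>g' s - g' t\<bar> \<le> K * \<bar>s - t\<bar>"
    by (rule C2_on_derivative_lipschitz[OF g]) blast
  define C where "C = 4 * A * Kg * (b - a) + 4 * A * K * (b - a)\<^sup>2 + Kg\<^sup>2 * (b - a)\<^sup>2"
  show ?thesis
  proof (rule that)
    fix n :: nat
    show "\<bar>pvar_n 2 (\<lambda>t. f t + g t) a b n - pvar_n 2 f a b n\<bar> \<le> C / real n"
    proof (cases n)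
      case (Suc m)
      define h where "h = (b - a) / real n"
      define T where "T j = a + (b - a) * real j / real n" for j
      define v where "v j = g (T j) - g (T (j - 1))" for j
      have h: "h \<ge> 0" using ab by (simp add: h_def)
      have T: "T j \<in> {a..b}" if "j \<le> n" for j
        unfolding T_def using ab that by (rule uniform_partition_point_mem)
      have step: "T j - T (j - 1) = h" if "j \<ge> 1" for j
        unfolding T_def h_def using that by (rule uniform_partition_step)
      have "\<bar>f (T j)\<bar> \<le> A" if "j \<le> n" for j
        using A T that by simp
      moreover have "\<bar>v j\<bar> \<le> Kg * h" if "j \<in> {1..n}" for j
      proof -
        have "T j \<in> {a..b}" "T (j - 1) \<in> {a..b}"
          using T that by auto
        then show ?thesis
          using Kg(2)[of "T j" "T (j - 1)"] step[of j] that h by (simp add: v_def)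
      qed
      moreover have "\<bar>v j - v (Suc j)\<bar> \<le> 2 * K * h\<^sup>2" if "j \<in> {1..m}" for j
      proof -
        have "T (j - 1) = T j - h" "T (Suc j) = T j + h"
          using step[of j] step[of "Suc j"] that by auto
        moreover have "a \<le> T (j - 1)" "T (Suc j) \<le> b"
          using T[of "j - 1"] T[of "Suc j"] that Suc by auto
        ultimately show ?thesis
          unfolding v_def using second_difference_le[OF g' lip K h] by simp
      qed
      ultimately have "\<bar>(\<Sum>j\<in>{1..n}. (f (T j) - f (T (j - 1)) + v j)\<^sup>2)
          - (\<Sum>j\<in>{1..n}. (f (T j) - f (T (j - 1)))\<^sup>2)\<bar>
          \<le> 4 * A * (Kg * h) + 2 * real m * A * (2 * K * h\<^sup>2) + real n * (Kg * h)\<^sup>2"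
        unfolding Suc by (rule sum_square_increment_perturb_le)
      also have "\<dots> \<le> C / real n"
        unfolding h_def C_def by (rule uniform_mesh_quadratic_le[OF A(1) K Suc])
      also have "(\<Sum>j\<in>{1..n}. (f (T j) - f (T (j - 1)) + v j)\<^sup>2) = pvar_n 2 (\<lambda>t. f t + g t) a b n"
        unfolding pvar_n_def by (intro sum.cong) (simp_all add: T_def v_def algebra_simps)
      also have "(\<Sum>j\<in>{1..n}. (f (T j) - f (T (j - 1)))\<^sup>2) = pvar_n 2 f a b n"
        unfolding pvar_n_def by (intro sum.cong) (simp_all add: T_def)
      finally show ?thesis .
    qed (simp add: pvar_n_def)
  qed
qed

lemma relative_bound_le:
  fixes w z c R :: real
  assumes "\<bar>w - z\<bar> \<le> c * (1 + \<bar>z\<bar>)" and "\<bar>z\<bar> \<le> R"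
  shows "\<bar>w - z\<bar> \<le> \<bar>c\<bar> * (1 + R)"
proof -
  have "c * (1 + \<bar>z\<bar>) \<le> \<bar>c\<bar> * (1 + \<bar>z\<bar>)"
    by (intro mult_right_mono) auto
  also have "\<dots> \<le> \<bar>c\<bar> * (1 + R)"
    using assms(2) by (intro mult_left_mono) auto
  finally show ?thesis using assms(1) by linarith
qed

lemma tendsto_mult_diff_zero_of_relative_bound:
  fixes r c w z :: "nat \<Rightarrow> real"
  assumes z: "Bseq z" and rc: "(\<lambda>n. r n * c n) \<longlonglongrightarrow> 0"
    and wz: "\<And>n. \<bar>w n - z n\<bar> \<le> c n * (1 + \<bar>z n\<bar>)"
  shows "(\<lambda>n. r n * (w n - z n)) \<longlonglongrightarrow> 0"
proof -
  obtain R where R: "\<And>n. \<bar>z n\<bar> \<le> R"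
    using z by (auto simp: Bseq_def)
  have "norm (r n * (w n - z n)) \<le> \<bar>r n * c n\<bar> * (1 + R)" for n
    using mult_left_mono[OF relative_bound_le[OF wz R] abs_ge_zero, of "r n"]
    by (simp add: abs_mult mult.assoc)
  moreover have "(\<lambda>n. \<bar>r n * c n\<bar> * (1 + R)) \<longlonglongrightarrow> 0"
    using rc by (intro tendsto_mult_left_zero tendsto_rabs_zero)
  ultimately show ?thesis
    by (rule Lim_null_comparison[OF always_eventually[OF allI]])
qed

lemma tendsto_of_relative_bound:
  fixes c w z :: "nat \<Rightarrow> real"
  assumes z: "z \<longlonglongrightarrow> l" and c: "c \<longlonglongrightarrow> 0"
    and wz: "\<And>n. \<bar>w n - z n\<bar> \<le> c n * (1 + \<bar>z n\<bar>)"
  shows "w \<longlonglongrightarrow> l"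
proof -
  have "(\<lambda>n. 1 * (w n - z n)) \<longlonglongrightarrow> 0"
    using z c wz by (intro tendsto_mult_diff_zero_of_relative_bound convergent_imp_Bseq convergentI) auto
  from tendsto_add[OF z this] show ?thesis by simp
qed

lemma tendsto_mult_real_powr_neg:
  fixes C s :: real
  assumes "s < 0"
  shows "(\<lambda>n. C * real n powr s) \<longlonglongrightarrow> 0"
  using tendsto_mult_right_zero[OF tendsto_neg_powr[OF assms filterlim_real_sequentially]]
  by simp

lemma pvar_n_add_C1_bound:
  fixes f g :: "real \<Rightarrow> real"
  assumes "p > 1" and "a \<le> b" and "C1_on a b g"
  obtains C where "\<And>n. \<bar>pvar_n p (\<lambda>t. f t + g t) a b n - pvar_n p f a b n\<bar>
    \<le> C * real n powr (1/p - 1) * (1 + \<bar>pvar_n p f a b n\<bar>)"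
proof -
  obtain K where K: "K \<ge> 0"
    and lip: "\<And>s t. s \<in> {a..b} \<Longrightarrow> t \<in> {a..b} \<Longrightarrow> \<bar>g s - g t\<bar> \<le> K * \<bar>s - t\<bar>"
    by (rule C1_on_lipschitz[OF assms(3)]) blast
  show ?thesis
  proof (rule pvar_n_add_lipschitz_bound[OF assms(1,2) K lip, where f = f])
    fix C assume "\<And>n. \<bar>pvar_n p (\<lambda>t. f t + g t) a b n - pvar_n p f a b n\<bar>
      \<le> C * real n powr (1/p - 1) * (1 + pvar_n p f a b n)"
    then show ?thesis
      by (intro that) (simp add: pvar_n_nonneg)
  qed
qed

lemma pvar_n_add_C1_tendsto:
  fixes f g :: "real \<Rightarrow> real"
  assumes "p > 1" and "a \<le> b" and "C1_on a b g" and "(\<lambda>n. pvar_n p f a b n) \<longlonglongrightarrow> l"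
  shows "(\<lambda>n. pvar_n p (\<lambda>t. f t + g t) a b n) \<longlonglongrightarrow> l"
proof -
  obtain C where bound: "\<And>n. \<bar>pvar_n p (\<lambda>t. f t + g t) a b n - pvar_n p f a b n\<bar>
      \<le> C * real n powr (1/p - 1) * (1 + \<bar>pvar_n p f a b n\<bar>)"
    by (rule pvar_n_add_C1_bound[OF assms(1-3), where f = f]) blast
  have "(\<lambda>n. C * real n powr (1/p - 1)) \<longlonglongrightarrow> 0"
    using assms(1) by (intro tendsto_mult_real_powr_neg) simp
  then show ?thesis
    by (rule tendsto_of_relative_bound[OF assms(4) _ bound])
qed

lemma pvar_n_add_C1_rate:
  fixes f g :: "real \<Rightarrow> real"
  assumes "p > 1" and "a \<le> b" and "C1_on a b g" and "\<alpha> + 1/p < 1"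
    and "convergent (\<lambda>n. pvar_n p f a b n)"
  shows "(\<lambda>n. real n powr \<alpha> * (pvar_n p (\<lambda>t. f t + g t) a b n - pvar_n p f a b n)) \<longlonglongrightarrow> 0"
proof -
  obtain C where bound: "\<And>n. \<bar>pvar_n p (\<lambda>t. f t + g t) a b n - pvar_n p f a b n\<bar>
      \<le> C * real n powr (1/p - 1) * (1 + \<bar>pvar_n p f a b n\<bar>)"
    by (rule pvar_n_add_C1_bound[OF assms(1-3), where f = f]) blast
  have "(\<lambda>n. C * real n powr (\<alpha> + (1/p - 1))) \<longlonglongrightarrow> 0"
    using assms(4) by (intro tendsto_mult_real_powr_neg) simp
  then have "(\<lambda>n. real n powr \<alpha> * (C * real n powr (1/p - 1))) \<longlonglongrightarrow> 0"
    by (simp add: powr_add[symmetric] algebra_simps)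
  then show ?thesis
    by (rule tendsto_mult_diff_zero_of_relative_bound[OF convergent_imp_Bseq[OF assms(5)] _ bound])
qed

lemma pvar_n_2_add_C2_rate:
  fixes f g :: "real \<Rightarrow> real"
  assumes "a \<le> b" and "continuous_on {a..b} f" and "C2_on a b g"
  shows "(\<lambda>n. real n powr (1/2) * (pvar_n 2 (\<lambda>t. f t + g t) a b n - pvar_n 2 f a b n)) \<longlonglongrightarrow> 0"
proof -
  obtain C where bound: "\<And>n. \<bar>pvar_n 2 (\<lambda>t. f t + g t) a b n - pvar_n 2 f a b n\<bar> \<le> C / real n"
    by (rule pvar_n_2_add_C2_bound[OF assms]) blast
  have "norm (real n powr (1/2) * (pvar_n 2 (\<lambda>t. f t + g t) a b n - pvar_n 2 f a b n))
      \<le> C * real n powr (-1/2)" for n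
  proof -
    have "norm (real n powr (1/2) * (pvar_n 2 (\<lambda>t. f t + g t) a b n - pvar_n 2 f a b n))
        \<le> real n powr (1/2) * (C / real n)"
      unfolding real_norm_def abs_mult using mult_left_mono[OF bound[of n], of "real n powr (1/2)"] by simp
    also have "\<dots> = C * real n powr (-1/2)"
      by (cases "n = 0") (simp_all add: powr_minus_divide powr_half_sqrt field_simps)
    finally show ?thesis .
  qed
  then show ?thesis
    by (auto intro!: Lim_null_comparison[OF _ tendsto_mult_real_powr_neg[of "-1/2" C]])
qed

lemma measure_tendsto_zero_of_AE_eventually_notin:
  assumes "prob_space M" and F: "\<And>n. F n \<in> sets M"
    and ev: "AE \<omega> in M. eventually (\<lambda>n. \<omega> \<notin> F n) sequentially"
  shows "(\<lambda>n. measure M (F n)) \<longlonglongrightarrow> 0"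
proof -
  interpret prob_space M by fact
  have "(\<lambda>n. integral\<^sup>L M (indicator (F n) :: _ \<Rightarrow> real)) \<longlonglongrightarrow> integral\<^sup>L M (\<lambda>_. 0::real)"
  proof (rule integral_dominated_convergence[where w = "\<lambda>_. 1"])
    show "AE x in M. (\<lambda>n. indicator (F n) x :: real) \<longlonglongrightarrow> 0"
      using ev
    proof eventually_elim
      case (elim x)
      then have "eventually (\<lambda>n. indicator (F n) x = (0::real)) sequentially"
        by (rule eventually_mono) auto
      then show ?case by (rule tendsto_eventually)
    qed
  qed (auto intro: borel_measurable_indicator F)
  then show ?thesis using F by simp
qed

lemma measure_abs_ge_tendsto_zero:
  fixes D :: "nat \<Rightarrow> 'a \<Rightarrow> real"
  assumes "prob_space M" and D: "\<And>n. D n \<in> borel_measurable M"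
    and lim: "AE \<omega> in M. (\<lambda>n. D n \<omega>) \<longlonglongrightarrow> 0" and d: "d > 0"
  shows "(\<lambda>n. measure M {\<omega>\<in>space M. d \<le> \<bar>D n \<omega>\<bar>}) \<longlonglongrightarrow> 0"
proof (rule measure_tendsto_zero_of_AE_eventually_notin[OF assms(1)])
  show "{\<omega>\<in>space M. d \<le> \<bar>D n \<omega>\<bar>} \<in> sets M" for n
    using D[of n, measurable] by measurable
  show "AE \<omega> in M. eventually (\<lambda>n. \<omega> \<notin> {\<omega>\<in>space M. d \<le> \<bar>D n \<omega>\<bar>}) sequentially"
    using lim
  proof eventually_elim
    case (elim \<omega>)
    then have "eventually (\<lambda>n. dist (D n \<omega>) 0 < d) sequentially"
      using d by (rule tendstoD)
    then show ?case by (rule eventually_mono) auto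
  qed
qed

lemma measure_le_Un:
  assumes "prob_space M" "A \<subseteq> B \<union> C" "B \<in> sets M" "C \<in> sets M"
  shows "measure M A \<le> measure M B + measure M C"
proof -
  interpret prob_space M by fact
  have "measure M A \<le> measure M (B \<union> C)"
    using assms by (intro finite_measure_mono) auto
  also have "\<dots> \<le> measure M B + measure M C"
    using assms by (intro measure_Un_le)
  finally show ?thesis .
qed

lemma tendsto_of_shifted_bounds:
  fixes F :: "real \<Rightarrow> real" and FZ G :: "nat \<Rightarrow> real \<Rightarrow> real" and FW :: "nat \<Rightarrow> real"
  assumes cont: "isCont F x" and FZ: "\<And>y. (\<lambda>n. FZ n y) \<longlonglongrightarrow> F y"
    and G: "\<And>d. d > 0 \<Longrightarrow> (\<lambda>n. G n d) \<longlonglongrightarrow> 0"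
    and upper: "\<And>n d. FW n \<le> FZ n (x + d) + G n d"
    and lower: "\<And>n d. FZ n (x - d) \<le> FW n + G n d"
  shows "FW \<longlonglongrightarrow> F x"
proof (rule tendstoI)
  fix e :: real assume e: "e > 0"
  obtain s where s: "s > 0" and near: "\<And>y. y \<noteq> x \<and> norm (y - x) < s \<Longrightarrow> norm (F y - F x) < e/3"
    using cont e unfolding isCont_def LIM_eq by (meson divide_pos_pos zero_less_numeral)
  define d where "d = s/2"
  have d: "d > 0" using s by (simp add: d_def)
  have nearF: "\<bar>F (x + d) - F x\<bar> < e/3" "\<bar>F (x - d) - F x\<bar> < e/3"
    using near[of "x + d"] near[of "x - d"] s d by (simp_all add: d_def)
  have "eventually (\<lambda>n. dist (FZ n (x + d)) (F (x + d)) < e/3) sequentially"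
    "eventually (\<lambda>n. dist (FZ n (x - d)) (F (x - d)) < e/3) sequentially"
    "eventually (\<lambda>n. dist (G n d) 0 < e/3) sequentially"
    using FZ G[OF d] e by (intro tendstoD; simp)+
  then show "eventually (\<lambda>n. dist (FW n) (F x) < e) sequentially"
  proof eventually_elim
    case (elim n)
    then show ?case
      using upper[of n d] lower[of n d] nearF unfolding dist_real_def by arith
  qed
qed

lemma weak_conv_m_of_AE_diff_tendsto_zero:
  fixes Z W :: "nat \<Rightarrow> 'a \<Rightarrow> real"
  assumes P: "prob_space M" and Z: "\<And>n. Z n \<in> borel_measurable M"
    and W: "\<And>n. W n \<in> borel_measurable M"
    and cont: "\<And>x. isCont (cdf N) x"
    and wc: "weak_conv_m (\<lambda>n. distr M borel (Z n)) N"
    and diff: "AE \<omega> in M. (\<lambda>n. W n \<omega> - Z n \<omega>) \<longlonglongrightarrow> 0"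
  shows "weak_conv_m (\<lambda>n. distr M borel (W n)) N"
  unfolding weak_conv_m_def weak_conv_def
proof (intro allI impI)
  fix x
  define FZ where "FZ n y = measure M {\<omega>\<in>space M. Z n \<omega> \<le> y}" for n y
  define FW where "FW n y = measure M {\<omega>\<in>space M. W n \<omega> \<le> y}" for n y
  define G where "G n d = measure M {\<omega>\<in>space M. d \<le> \<bar>W n \<omega> - Z n \<omega>\<bar>}" for n d
  note Z[measurable] W[measurable]
  have cdf_Z: "cdf (distr M borel (Z n)) y = FZ n y" for n y
    unfolding FZ_def by (simp add: cdf_def2 measure_distr vimage_def Int_def conj_commute)
  have cdf_W: "cdf (distr M borel (W n)) y = FW n y" for n y
    unfolding FW_def by (simp add: cdf_def2 measure_distr vimage_def Int_def conj_commute)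
  show "(\<lambda>n. cdf (distr M borel (W n)) x) \<longlonglongrightarrow> cdf N x"
    unfolding cdf_W
  proof (rule tendsto_of_shifted_bounds[OF cont])
    show "(\<lambda>n. FZ n y) \<longlonglongrightarrow> cdf N y" for y
      using wc cont[of y] unfolding weak_conv_m_def weak_conv_def cdf_Z by blast
    show "(\<lambda>n. G n d) \<longlonglongrightarrow> 0" if "d > 0" for d
      unfolding G_def by (rule measure_abs_ge_tendsto_zero[OF P _ diff that]) simp
    \<comment> \<open>W n \<le> x forces Z n \<le> x + d or a deviation of size d, and symmetrically.\<close>
    show "FW n x \<le> FZ n (x + d) + G n d" "FZ n (x - d) \<le> FW n x + G n d" for n d
      unfolding FW_def FZ_def G_def by (rule measure_le_Un[OF P]; auto)+
  qed
qed

lemma measure_abs_gt_small: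
  fixes V :: "'a \<Rightarrow> real"
  assumes "prob_space M" and V: "V \<in> borel_measurable M" and \<eta>: "\<eta> > 0"
  obtains R where "measure M {\<omega>\<in>space M. R < \<bar>V \<omega>\<bar>} < \<eta>"
proof -
  interpret prob_space M by fact
  note V[measurable]
  define A where "A k = {\<omega>\<in>space M. real k < \<bar>V \<omega>\<bar>}" for k :: nat
  have "(\<lambda>k. measure M (A k)) \<longlonglongrightarrow> measure M (\<Inter>k. A k)"
    by (rule finite_Lim_measure_decseq) (auto simp: A_def decseq_def)
  moreover have "(\<Inter>k. A k) = {}"
  proof safe
    fix \<omega> assume "\<omega> \<in> (\<Inter>k. A k)"
    moreover obtain k :: nat where "\<bar>V \<omega>\<bar> < real k"
      using reals_Archimedean2 by blast
    ultimately show "\<omega> \<in> {}" by (auto simp: A_def dest!: spec[of _ k])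
  qed
  ultimately have "(\<lambda>k. measure M (A k)) \<longlonglongrightarrow> 0"
    by simp
  then have "eventually (\<lambda>k. dist (measure M (A k)) 0 < \<eta>) sequentially"
    using \<eta> by (rule tendstoD)
  then obtain k where "measure M (A k) < \<eta>"
    by (auto simp: eventually_sequentially)
  then show ?thesis using that[of "real k"] by (simp add: A_def)
qed

lemma measure_relative_deviation_tendsto_zero:
  fixes Z W :: "nat \<Rightarrow> 'a \<Rightarrow> real"
  assumes P: "prob_space M" and [measurable]: "\<And>n. Z n \<in> borel_measurable M"
    and [measurable]: "\<And>n. W n \<in> borel_measurable M"
    and WZ: "\<And>\<omega>. \<omega> \<in> space M \<Longrightarrow>
      \<exists>c. c \<longlonglongrightarrow> 0 \<and> (\<forall>n. \<bar>W n \<omega> - Z n \<omega>\<bar> \<le> c n * (1 + \<bar>Z n \<omega>\<bar>))"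
    and e: "e > 0"
  shows "(\<lambda>n. measure M {\<omega>\<in>space M. e < \<bar>W n \<omega> - Z n \<omega>\<bar> \<and> \<bar>Z n \<omega>\<bar> \<le> R}) \<longlonglongrightarrow> 0"
proof (rule measure_tendsto_zero_of_AE_eventually_notin[OF P], measurable, intro AE_I2)
  fix \<omega> assume "\<omega> \<in> space M"
  then obtain c where c: "c \<longlonglongrightarrow> 0"
    and bound: "\<And>n. \<bar>W n \<omega> - Z n \<omega>\<bar> \<le> c n * (1 + \<bar>Z n \<omega>\<bar>)"
    using WZ by blast
  have "(\<lambda>n. \<bar>c n\<bar> * (1 + R)) \<longlonglongrightarrow> 0"
    using c by (intro tendsto_mult_left_zero tendsto_rabs_zero)
  then have "eventually (\<lambda>n. \<bar>c n\<bar> * (1 + R) < e) sequentially"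
    by (rule order_tendstoD(2)) (use e in simp)
  then show "eventually (\<lambda>n. \<omega> \<notin> {\<omega>\<in>space M. e < \<bar>W n \<omega> - Z n \<omega>\<bar> \<and> \<bar>Z n \<omega>\<bar> \<le> R}) sequentially"
    by eventually_elim (use relative_bound_le[OF bound] in fastforce)
qed

lemma conv_in_prob_of_relative_bound:
  fixes Z W :: "nat \<Rightarrow> 'a \<Rightarrow> real" and V :: "'a \<Rightarrow> real"
  assumes P: "prob_space M" and Z: "\<And>n. Z n \<in> borel_measurable M"
    and W: "\<And>n. W n \<in> borel_measurable M" and V: "V \<in> borel_measurable M"
    and ZV: "conv_in_prob M Z V"
    and WZ: "\<And>\<omega>. \<omega> \<in> space M \<Longrightarrow>
      \<exists>c. c \<longlonglongrightarrow> 0 \<and> (\<forall>n. \<bar>W n \<omega> - Z n \<omega>\<bar> \<le> c n * (1 + \<bar>Z n \<omega>\<bar>))"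
  shows "conv_in_prob M W V"
  unfolding conv_in_prob_def
proof (intro allI impI)
  fix e :: real assume e: "e > 0"
  note Z[measurable] W[measurable] V[measurable]
  show "(\<lambda>n. measure M {\<omega>\<in>space M. e < \<bar>W n \<omega> - V \<omega>\<bar>}) \<longlonglongrightarrow> 0"
  proof (rule tendstoI)
    fix \<eta> :: real assume \<eta>: "\<eta> > 0"
    obtain R where R: "measure M {\<omega>\<in>space M. R < \<bar>V \<omega>\<bar>} < \<eta>/3"
      using measure_abs_gt_small[OF P V, of "\<eta>/3"] \<eta> by auto
    define A where "A n = {\<omega>\<in>space M. e/2 < \<bar>Z n \<omega> - V \<omega>\<bar>}" for n
    define F where "F n = {\<omega>\<in>space M. e/2 < \<bar>W n \<omega> - Z n \<omega>\<bar> \<and> \<bar>Z n \<omega>\<bar> \<le> R + e}" for n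
    have A_sets: "A n \<in> sets M" for n unfolding A_def by measurable
    have F_sets: "F n \<in> sets M" for n unfolding F_def by measurable
    have "(\<lambda>n. measure M (A n)) \<longlonglongrightarrow> 0"
      using ZV half_gt_zero[OF e] unfolding conv_in_prob_def A_def by blast
    then have A_small: "eventually (\<lambda>n. measure M (A n) < \<eta>/3) sequentially"
      by (rule order_tendstoD(2)) (use \<eta> in simp)
    have "(\<lambda>n. measure M (F n)) \<longlonglongrightarrow> 0"
      unfolding F_def by (rule measure_relative_deviation_tendsto_zero[OF P Z W WZ half_gt_zero[OF e]])
    then have F_small: "eventually (\<lambda>n. measure M (F n) < \<eta>/3) sequentially"
      by (rule order_tendstoD(2)) (use \<eta> in simp)
    show "eventually (\<lambda>n. dist (measure M {\<omega>\<in>space M. e < \<bar>W n \<omega> - V \<omega>\<bar>}) 0 < \<eta>) sequentially"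
      using A_small F_small
    proof eventually_elim
      case (elim n)
      \<comment> \<open>Off A n and off the tail of V, a deviation of W n from V forces one of W n from Z n.\<close>
      have "{\<omega>\<in>space M. e < \<bar>W n \<omega> - V \<omega>\<bar>} \<subseteq> (A n \<union> F n) \<union> {\<omega>\<in>space M. R < \<bar>V \<omega>\<bar>}"
        by (auto simp: A_def F_def split: abs_split)
      then have "measure M {\<omega>\<in>space M. e < \<bar>W n \<omega> - V \<omega>\<bar>}
          \<le> measure M (A n \<union> F n) + measure M {\<omega>\<in>space M. R < \<bar>V \<omega>\<bar>}"
        using A_sets F_sets by (intro measure_le_Un[OF P]) auto
      also have "\<dots> \<le> measure M (A n) + measure M (F n) + measure M {\<omega>\<in>space M. R < \<bar>V \<omega>\<bar>}"
        using measure_le_Un[OF P _ A_sets F_sets, of "A n \<union> F n"] by simp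
      finally show ?case
        using elim R by simp
    qed
  qed
qed

lemma measurable_pvar_n:
  fixes X :: "real \<Rightarrow> 'a \<Rightarrow> real"
  assumes [measurable]: "\<And>t. X t \<in> borel_measurable M"
  shows "(\<lambda>\<omega>. pvar_n p (\<lambda>t. X t \<omega>) a b n) \<in> borel_measurable M"
  unfolding pvar_n_def by measurable

lemma isCont_cdf_normal_density:
  fixes \<sigma> :: real
  assumes "\<sigma> > 0"
  shows "isCont (cdf (density lborel (normal_density 0 \<sigma>))) x"
proof -
  interpret real_distribution "density lborel (normal_density 0 \<sigma>)"
    using prob_space_normal_density[OF assms]
    by (simp add: real_distribution_def real_distribution_axioms_def)
  have "AE y in lborel. y \<in> {x} \<longrightarrow> ennreal (normal_density 0 \<sigma> y) = 0"
    using AE_lborel_singleton[of x] by eventually_elim auto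
  then have "{x} \<in> null_sets (density lborel (normal_density 0 \<sigma>))"
    by (subst null_sets_density_iff) auto
  then show ?thesis
    by (simp add: isCont_cdf measure_def null_setsD1)
qed

lemma AE_pvar_n_add_tendsto:
  fixes X Y :: "real \<Rightarrow> 'a \<Rightarrow> real"
  assumes "p > 1" and "a \<le> b" and C1: "\<And>\<omega>. \<omega> \<in> space M \<Longrightarrow> C1_on a b (\<lambda>t. Y t \<omega>)"
    and "AE \<omega> in M. convergent (\<lambda>n. pvar_n p (\<lambda>t. X t \<omega>) a b n)"
  shows "AE \<omega> in M. (\<lambda>n. pvar_n p (\<lambda>t. X t \<omega> + Y t \<omega>) a b n)
    \<longlonglongrightarrow> lim (\<lambda>n. pvar_n p (\<lambda>t. X t \<omega>) a b n)"
  using assms(4) AE_space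
proof eventually_elim
  case (elim \<omega>)
  then show ?case
    by (intro pvar_n_add_C1_tendsto[OF assms(1,2) C1]) (simp_all add: convergent_LIMSEQ_iff)
qed

lemma conv_in_prob_pvar_n_add:
  fixes X Y :: "real \<Rightarrow> 'a \<Rightarrow> real" and V :: "'a \<Rightarrow> real"
  assumes P: "prob_space M" and p: "p > 1" and ab: "a \<le> b"
    and X: "\<And>t. X t \<in> borel_measurable M" and Y: "\<And>t. Y t \<in> borel_measurable M"
    and V: "V \<in> borel_measurable M" and C1: "\<And>\<omega>. \<omega> \<in> space M \<Longrightarrow> C1_on a b (\<lambda>t. Y t \<omega>)"
    and XV: "conv_in_prob M (\<lambda>n \<omega>. pvar_n p (\<lambda>t. X t \<omega>) a b n) V"
  shows "conv_in_prob M (\<lambda>n \<omega>. pvar_n p (\<lambda>t. X t \<omega> + Y t \<omega>) a b n) V"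
proof (rule conv_in_prob_of_relative_bound[OF P _ _ V XV])
  show "(\<lambda>\<omega>. pvar_n p (\<lambda>t. X t \<omega>) a b n) \<in> borel_measurable M" for n
    by (rule measurable_pvar_n[OF X])
  show "(\<lambda>\<omega>. pvar_n p (\<lambda>t. X t \<omega> + Y t \<omega>) a b n) \<in> borel_measurable M" for n
    using X Y by (intro measurable_pvar_n) measurable
  fix \<omega> assume "\<omega> \<in> space M"
  from pvar_n_add_C1_bound[OF p ab C1[OF this], where f = "\<lambda>t. X t \<omega>"]
  obtain C where "\<And>n. \<bar>pvar_n p (\<lambda>t. X t \<omega> + Y t \<omega>) a b n - pvar_n p (\<lambda>t. X t \<omega>) a b n\<bar>
      \<le> C * real n powr (1/p - 1) * (1 + \<bar>pvar_n p (\<lambda>t. X t \<omega>) a b n\<bar>)"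
    by blast
  moreover have "(\<lambda>n. C * real n powr (1/p - 1)) \<longlonglongrightarrow> 0"
    using p by (intro tendsto_mult_real_powr_neg) simp
  ultimately show "\<exists>c. c \<longlonglongrightarrow> 0 \<and> (\<forall>n. \<bar>pvar_n p (\<lambda>t. X t \<omega> + Y t \<omega>) a b n - pvar_n p (\<lambda>t. X t \<omega>) a b n\<bar>
      \<le> c n * (1 + \<bar>pvar_n p (\<lambda>t. X t \<omega>) a b n\<bar>))"
    by blast
qed

lemma weak_conv_m_normal_pvar_n_add:
  fixes X Y :: "real \<Rightarrow> 'a \<Rightarrow> real"
  assumes P: "prob_space M" and \<sigma>: "\<sigma> > 0"
    and X: "\<And>t. X t \<in> borel_measurable M" and Y: "\<And>t. Y t \<in> borel_measurable M"
    and rate: "AE \<omega> in M. (\<lambda>n. real n powr \<alpha> *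
      (pvar_n p (\<lambda>t. X t \<omega> + Y t \<omega>) a b n - pvar_n p (\<lambda>t. X t \<omega>) a b n)) \<longlonglongrightarrow> 0"
    and X_normal: "weak_conv_m (\<lambda>n. distr M borel (\<lambda>\<omega>. real n powr \<alpha> *
      (pvar_n p (\<lambda>t. X t \<omega>) a b n - lim (\<lambda>m. pvar_n p (\<lambda>t. X t \<omega>) a b m))))
      (density lborel (normal_density 0 \<sigma>))"
  shows "weak_conv_m (\<lambda>n. distr M borel (\<lambda>\<omega>. real n powr \<alpha> *
      (pvar_n p (\<lambda>t. X t \<omega> + Y t \<omega>) a b n - lim (\<lambda>m. pvar_n p (\<lambda>t. X t \<omega>) a b m))))
      (density lborel (normal_density 0 \<sigma>))"
proof (rule weak_conv_m_of_AE_diff_tendsto_zero[OF P _ _ isCont_cdf_normal_density[OF \<sigma>] X_normal])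
  have pX: "(\<lambda>\<omega>. pvar_n p (\<lambda>t. X t \<omega>) a b n) \<in> borel_measurable M" for n
    by (rule measurable_pvar_n[OF X])
  have pXY: "(\<lambda>\<omega>. pvar_n p (\<lambda>t. X t \<omega> + Y t \<omega>) a b n) \<in> borel_measurable M" for n
    using X Y by (intro measurable_pvar_n) measurable
  have L: "(\<lambda>\<omega>. lim (\<lambda>m. pvar_n p (\<lambda>t. X t \<omega>) a b m)) \<in> borel_measurable M"
    by (rule borel_measurable_lim_metric[OF pX])
  show "(\<lambda>\<omega>. real n powr \<alpha> * (pvar_n p (\<lambda>t. X t \<omega>) a b n - lim (\<lambda>m. pvar_n p (\<lambda>t. X t \<omega>) a b m)))
      \<in> borel_measurable M"
    "(\<lambda>\<omega>. real n powr \<alpha> * (pvar_n p (\<lambda>t. X t \<omega> + Y t \<omega>) a b n - lim (\<lambda>m. pvar_n p (\<lambda>t. X t \<omega>) a b m)))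
      \<in> borel_measurable M" for n
    using pX pXY L by (intro borel_measurable_times borel_measurable_const borel_measurable_diff; simp)+
  show "AE \<omega> in M. (\<lambda>n.
      real n powr \<alpha> * (pvar_n p (\<lambda>t. X t \<omega> + Y t \<omega>) a b n - lim (\<lambda>m. pvar_n p (\<lambda>t. X t \<omega>) a b m))
      - real n powr \<alpha> * (pvar_n p (\<lambda>t. X t \<omega>) a b n - lim (\<lambda>m. pvar_n p (\<lambda>t. X t \<omega>) a b m))) \<longlonglongrightarrow> 0"
    using rate by eventually_elim (simp add: algebra_simps)
qed

theorem proposition2p1:
  fixes M :: "'a measure" and X Y :: "real \<Rightarrow> 'a \<Rightarrow> real" and a b :: real
  assumes "prob_space M"
    and "a < b"
    and "\<And>t. X t \<in> borel_measurable M"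
    and "\<And>t. Y t \<in> borel_measurable M"
    and "\<And>\<omega>. \<omega> \<in> space M \<Longrightarrow> continuous_on {a..b} (\<lambda>t. X t \<omega>)"
    and "\<And>\<omega>. \<omega> \<in> space M \<Longrightarrow> C1_on a b (\<lambda>t. Y t \<omega>)"
  shows
    "(\<forall>p>1. (AE \<omega> in M. convergent (\<lambda>n. pvar_n p (\<lambda>t. X t \<omega>) a b n)
                          \<and> 0 < lim (\<lambda>n. pvar_n p (\<lambda>t. X t \<omega>) a b n))
        \<longrightarrow> (AE \<omega> in M. (\<lambda>n. pvar_n p (\<lambda>t. X t \<omega> + Y t \<omega>) a b n)
                \<longlonglongrightarrow> lim (\<lambda>n. pvar_n p (\<lambda>t. X t \<omega>) a b n)))
   \<and> (\<forall>p>1. \<forall>V. V \<in> borel_measurable M \<and> (AE \<omega> in M. 0 < V \<omega>)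
        \<and> conv_in_prob M (\<lambda>n \<omega>. pvar_n p (\<lambda>t. X t \<omega>) a b n) V
        \<longrightarrow> conv_in_prob M (\<lambda>n \<omega>. pvar_n p (\<lambda>t. X t \<omega> + Y t \<omega>) a b n) V)
   \<and> (\<forall>p>1. \<forall>\<alpha>>0. \<forall>\<sigma>\<^sub>0>0. \<alpha> + 1 / p < 1
        \<and> (AE \<omega> in M. convergent (\<lambda>n. pvar_n p (\<lambda>t. X t \<omega>) a b n)
                          \<and> 0 < lim (\<lambda>n. pvar_n p (\<lambda>t. X t \<omega>) a b n))
        \<and> weak_conv_m (\<lambda>n. distr M borel (\<lambda>\<omega>. real n powr \<alpha> *
              (pvar_n p (\<lambda>t. X t \<omega>) a b n - lim (\<lambda>m. pvar_n p (\<lambda>t. X t \<omega>) a b m))))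
            (density lborel (normal_density 0 \<sigma>\<^sub>0))
        \<longrightarrow> weak_conv_m (\<lambda>n. distr M borel (\<lambda>\<omega>. real n powr \<alpha> *
              (pvar_n p (\<lambda>t. X t \<omega> + Y t \<omega>) a b n - lim (\<lambda>m. pvar_n p (\<lambda>t. X t \<omega>) a b m))))
            (density lborel (normal_density 0 \<sigma>\<^sub>0)))
   \<and> ((\<forall>\<omega>\<in>space M. C2_on a b (\<lambda>t. Y t \<omega>)) \<longrightarrow>
      (\<forall>\<sigma>\<^sub>0>0.
        (AE \<omega> in M. convergent (\<lambda>n. pvar_n 2 (\<lambda>t. X t \<omega>) a b n)
                          \<and> 0 < lim (\<lambda>n. pvar_n 2 (\<lambda>t. X t \<omega>) a b n))
        \<and> weak_conv_m (\<lambda>n. distr M borel (\<lambda>\<omega>. real n powr (1/2) *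
              (pvar_n 2 (\<lambda>t. X t \<omega>) a b n - lim (\<lambda>m. pvar_n 2 (\<lambda>t. X t \<omega>) a b m))))
            (density lborel (normal_density 0 \<sigma>\<^sub>0))
        \<longrightarrow> weak_conv_m (\<lambda>n. distr M borel (\<lambda>\<omega>. real n powr (1/2) *
              (pvar_n 2 (\<lambda>t. X t \<omega> + Y t \<omega>) a b n - lim (\<lambda>m. pvar_n 2 (\<lambda>t. X t \<omega>) a b m))))
            (density lborel (normal_density 0 \<sigma>\<^sub>0))))"
proof -
  have ab: "a \<le> b" using assms(2) by simp
  have convergent: "AE \<omega> in M. convergent (\<lambda>n. pvar_n p (\<lambda>t. X t \<omega>) a b n)"
    if "AE \<omega> in M. convergent (\<lambda>n. pvar_n p (\<lambda>t. X t \<omega>) a b n)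
      \<and> 0 < lim (\<lambda>n. pvar_n p (\<lambda>t. X t \<omega>) a b n)" for p
    using that by eventually_elim simp
  have rate_C1: "AE \<omega> in M. (\<lambda>n. real n powr \<alpha> *
      (pvar_n p (\<lambda>t. X t \<omega> + Y t \<omega>) a b n - pvar_n p (\<lambda>t. X t \<omega>) a b n)) \<longlonglongrightarrow> 0"
    if "p > 1" "\<alpha> + 1/p < 1" "AE \<omega> in M. convergent (\<lambda>n. pvar_n p (\<lambda>t. X t \<omega>) a b n)" for p \<alpha>
    using that(3) AE_space by eventually_elim (rule pvar_n_add_C1_rate[OF that(1) ab assms(6) that(2)])
  have rate_C2: "AE \<omega> in M. (\<lambda>n. real n powr (1/2) *
      (pvar_n 2 (\<lambda>t. X t \<omega> + Y t \<omega>) a b n - pvar_n 2 (\<lambda>t. X t \<omega>) a b n)) \<longlonglongrightarrow> 0"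
    if "\<forall>\<omega>\<in>space M. C2_on a b (\<lambda>t. Y t \<omega>)"
    using AE_space by eventually_elim (rule pvar_n_2_add_C2_rate[OF ab assms(5) that[rule_format]])
  show ?thesis
    apply (intro conjI allI impI; (elim conjE)?)
    subgoal for p
      by (rule AE_pvar_n_add_tendsto[OF _ ab assms(6) convergent])
    subgoal for p V
      by (rule conv_in_prob_pvar_n_add[where X = X and Y = Y, OF assms(1) _ ab assms(3,4) _ assms(6)])
    subgoal for p \<alpha> \<sigma>
      by (rule weak_conv_m_normal_pvar_n_add[where X = X and Y = Y, OF assms(1) _ assms(3,4)
          rate_C1[OF _ _ convergent]])
    subgoal for \<sigma>
      by (rule weak_conv_m_normal_pvar_n_add[where X = X and Y = Y, OF assms(1) _ assms(3,4) rate_C2])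
    done
qed

end
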